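(* Let $\mu$ be a compactly supported Borel probability measure on $\mathbb R^n$, $\alpha\ge0$, $q,t\in\mathbb R$ and $\delta>0$ with $\delta\le\alpha q+t$. Then: (1)(a) if $q\le0$ and $A\subseteq\overline E^\alpha$ is Borel, then $\mathsf P^{\alpha q+t-\delta}(A)\ge2^{\alpha q-\delta}\,\mathsf P^{q,t}_\mu(A)$; (1)(b) if $q\ge0$ and $A\subseteq\underline E_\alpha$ is Borel, then $\mathsf P^{\alpha q+t-\delta}(A)\ge2^{\alpha q-\delta}\,\mathsf P^{q,t}_\mu(A)$; in particular, if $A\subseteq\underline E_\alpha$ is Borel with $\mu(A)>0$, then $\overline\dim_{MB}(A)\ge\alpha$; (2)(a) if $q\le0$ and $A\subseteq\overline E^\alpha$ is Borel, then $\mathsf H^{\alpha q+t-\delta}(A)\ge2^{\alpha q-\delta}\,\mathsf H^{q,t}_\mu(A)$; (2)(b) if $q\ge0$ and $A\subseteq\underline E_\alpha$ is Borel, then $\mathsf H^{\alpha q+t-\delta}(A)\ge2^{\alpha q-\delta}\,\mathsf H^{q,t}_\mu(A)$; in particular, if $A\subseteq\underline E_\alpha$ is Borel with $\mu(A)>0$, then $\underline\dim_{MB}(A)\ge\alpha$.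
   Context: $B(x,r)$ is the closed ball. Multifractal Hewitt–Stromberg measures: for $E\subseteq\mathbb R^n$, $r>0$, $q,t\in\mathbb R$, $N^q_{\mu,r}(E)=\inf\sum_i\mu(B(x_i,r))^q$ over centred coverings $(B(x_i,r))_i$ of $E$ ($x_i\in E$, $E\subseteq\bigcup_iB(x_i,r)$), $M^q_{\mu,r}(E)=\sup\sum_i\mu(B(x_i,r))^q$ over centred packings (pairwise disjoint $B(x_i,r)$, $x_i\in E$); $\mathsf L^{q,t}_\mu(E)=\liminf_{r\to0}N^q_{\mu,r}(E)(2r)^t$, $\mathsf C^{q,t}_\mu(E)=\limsup_{r\to0}M^q_{\mu,r}(E)(2r)^t$; $\overline{\mathsf H}^{q,t}_\mu(E)=\inf\{\sum_i\mathsf L^{q,t}_\mu(E_i):E\subseteq\bigcup_iE_i,E_i\text{ bounded}\}$, $\mathsf H^{q,t}_\mu(E)=\sup_{F\subseteq E}\overline{\mathsf H}^{q,t}_\mu(F)$, $\mathsf P^{q,t}_\mu(E)=\inf\{\sum_i\mathsf C^{q,t}_\mu(E_i):E\subseteq\bigcup_iE_i,E_i\text{ bounded}\}$. Hewitt–Stromberg measures: $N_r(E)$ least number of closed $r$-balls centred in $E$ covering $E$, $M_r(E)$ largest number of points of $E$ with pairwise distances $\ge r$; $\overline{\mathsf H}^s(E)=\liminf_{r\to0}N_r(E)(2r)^s$, $\overline{\mathsf P}^s(E)=\limsup_{r\to0}M_r(E)(2r)^s$, $\mathsf H^s(E)=\inf\{\sum_i\overline{\mathsf H}^s(E_i):E\subseteq\bigcup_iE_i\}$,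 $\mathsf P^s$ analogously; $\underline\dim_{MB}E=\inf\{s\ge0:\mathsf H^s(E)=0\}$, $\overline\dim_{MB}E=\inf\{s\ge0:\mathsf P^s(E)=0\}$. Local dimensions $\underline\alpha_\mu(x)=\liminf_{r\to0}\frac{\log\mu(B(x,r))}{\log r}$, $\overline\alpha_\mu(x)=\limsup_{r\to0}\frac{\log\mu(B(x,r))}{\log r}$; $\overline E^\alpha=\{x\in\operatorname{supp}\mu:\overline\alpha_\mu(x)\le\alpha\}$, $\underline E_\alpha=\{x\in\operatorname{supp}\mu:\underline\alpha_\mu(x)\ge\alpha\}$. *)

theory Defs
  imports "HOL-Probability.Probability"
begin

definition msupp :: "'a::metric_space measure \<Rightarrow> 'a set" where
  "msupp \<mu> = {x. \<forall>e>0. emeasure \<mu> (ball x e) > 0}"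

definition ball_sum :: "'a::metric_space measure \<Rightarrow> real \<Rightarrow> real \<Rightarrow> 'a set \<Rightarrow> ennreal" where
  "ball_sum \<mu> q r C = (\<integral>\<^sup>+ x. ennreal (measure \<mu> (cball x r) powr q) \<partial>count_space C)"

definition mf_N :: "'a::metric_space measure \<Rightarrow> real \<Rightarrow> real \<Rightarrow> 'a set \<Rightarrow> ennreal" where
  "mf_N \<mu> q r E = (INF C \<in> {C. C \<subseteq> E \<and> countable C \<and> E \<subseteq> (\<Union>x\<in>C. cball x r)}. ball_sum \<mu> q r C)"

definition mf_M :: "'a::metric_space measure \<Rightarrow> real \<Rightarrow> real \<Rightarrow> 'a set \<Rightarrow> ennreal" where
  "mf_M \<mu> q r E = (SUP C \<in> {C. C \<subseteq> E \<and> disjoint_family_on (\<lambda>x. cball x r) C}. ball_sum \<mu> q r C)"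

definition mf_L :: "'a::metric_space measure \<Rightarrow> real \<Rightarrow> real \<Rightarrow> 'a set \<Rightarrow> ennreal" where
  "mf_L \<mu> q t E = Liminf (at_right 0) (\<lambda>r. mf_N \<mu> q r E * ennreal ((2 * r) powr t))"

definition mf_C :: "'a::metric_space measure \<Rightarrow> real \<Rightarrow> real \<Rightarrow> 'a set \<Rightarrow> ennreal" where
  "mf_C \<mu> q t E = Limsup (at_right 0) (\<lambda>r. mf_M \<mu> q r E * ennreal ((2 * r) powr t))"

definition mf_Hbar :: "'a::metric_space measure \<Rightarrow> real \<Rightarrow> real \<Rightarrow> 'a set \<Rightarrow> ennreal" where
  "mf_Hbar \<mu> q t E = (INF Es \<in> {Es :: nat \<Rightarrow> 'a set. E \<subseteq> (\<Union>i. Es i) \<and> (\<forall>i. bounded (Es i))}.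
      (\<Sum>i. mf_L \<mu> q t (Es i)))"

definition mf_H :: "'a::metric_space measure \<Rightarrow> real \<Rightarrow> real \<Rightarrow> 'a set \<Rightarrow> ennreal" where
  "mf_H \<mu> q t E = (SUP F \<in> Pow E. mf_Hbar \<mu> q t F)"

definition mf_P :: "'a::metric_space measure \<Rightarrow> real \<Rightarrow> real \<Rightarrow> 'a set \<Rightarrow> ennreal" where
  "mf_P \<mu> q t E = (INF Es \<in> {Es :: nat \<Rightarrow> 'a set. E \<subseteq> (\<Union>i. Es i) \<and> (\<forall>i. bounded (Es i))}.
      (\<Sum>i. mf_C \<mu> q t (Es i)))"

definition ecard :: "'a set \<Rightarrow> ennreal" where
  "ecard C = (if finite C then of_nat (card C) else \<infinity>)"

definition hs_N :: "real \<Rightarrow> 'a::metric_space set \<Rightarrow> ennreal" where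
  "hs_N r E = (INF C \<in> {C. C \<subseteq> E \<and> E \<subseteq> (\<Union>x\<in>C. cball x r)}. ecard C)"

definition hs_M :: "real \<Rightarrow> 'a::metric_space set \<Rightarrow> ennreal" where
  "hs_M r E = (SUP C \<in> {C. C \<subseteq> E \<and> (\<forall>x\<in>C. \<forall>y\<in>C. x \<noteq> y \<longrightarrow> dist x y \<ge> r)}. ecard C)"

definition hs_Hbar :: "real \<Rightarrow> 'a::metric_space set \<Rightarrow> ennreal" where
  "hs_Hbar s E = Liminf (at_right 0) (\<lambda>r. hs_N r E * ennreal ((2 * r) powr s))"

definition hs_Pbar :: "real \<Rightarrow> 'a::metric_space set \<Rightarrow> ennreal" where
  "hs_Pbar s E = Limsup (at_right 0) (\<lambda>r. hs_M r E * ennreal ((2 * r) powr s))"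

definition hs_H :: "real \<Rightarrow> 'a::metric_space set \<Rightarrow> ennreal" where
  "hs_H s E = (INF Es \<in> {Es :: nat \<Rightarrow> 'a set. E \<subseteq> (\<Union>i. Es i)}. (\<Sum>i. hs_Hbar s (Es i)))"

definition hs_P :: "real \<Rightarrow> 'a::metric_space set \<Rightarrow> ennreal" where
  "hs_P s E = (INF Es \<in> {Es :: nat \<Rightarrow> 'a set. E \<subseteq> (\<Union>i. Es i)}. (\<Sum>i. hs_Pbar s (Es i)))"

definition lower_dim_MB :: "'a::metric_space set \<Rightarrow> ereal" where
  "lower_dim_MB E = Inf (ereal ` {s. s \<ge> 0 \<and> hs_H s E = 0})"

definition upper_dim_MB :: "'a::metric_space set \<Rightarrow> ereal" where
  "upper_dim_MB E = Inf (ereal ` {s. s \<ge> 0 \<and> hs_P s E = 0})"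

definition lower_locdim :: "'a::metric_space measure \<Rightarrow> 'a \<Rightarrow> ereal" where
  "lower_locdim \<mu> x = Liminf (at_right 0) (\<lambda>r. ereal (ln (measure \<mu> (cball x r)) / ln r))"

definition upper_locdim :: "'a::metric_space measure \<Rightarrow> 'a \<Rightarrow> ereal" where
  "upper_locdim \<mu> x = Limsup (at_right 0) (\<lambda>r. ereal (ln (measure \<mu> (cball x r)) / ln r))"

definition Ebar_up :: "'a::metric_space measure \<Rightarrow> real \<Rightarrow> 'a set" where
  "Ebar_up \<mu> \<alpha> = {x \<in> msupp \<mu>. upper_locdim \<mu> x \<le> ereal \<alpha>}"

definition E_low :: "'a::metric_space measure \<Rightarrow> real \<Rightarrow> 'a set" where
  "E_low \<mu> \<alpha> = {x \<in> msupp \<mu>. lower_locdim \<mu> x \<ge> ereal \<alpha>}"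

end

theory Submission
  imports Defs
begin

text \<open>
  If every point of A satisfies mu(B(x,rho))^q <= rho^gamma for all small rho, and s < gamma + t,
  cut A into countably many pieces on which this holds below a fixed radius. On such a piece
  packings give M^q_{mu,r} <= r^gamma M_r, and recentring a rho-cover at points of the piece gives
  N^q_{mu,2rho} <= (2rho)^gamma N_rho. Hence the multifractal premeasures of a piece are dominated
  by the Hewitt-Stromberg ones of exponent s times (2r)^(gamma+t-s), which tends to 0. So
  P^{q,t}_mu(A) = 0 as soon as P^s(A) is finite (likewise for H), which is stronger than the
  asserted inequalities and makes the factor 2^(alpha q - delta) and the hypotheses alpha >= 0,
  delta <= alpha q + t irrelevant. The local dimension hypotheses supply the ball estimate with
  gamma = alpha q - delta/2 and s = alpha q + t - delta. For the dimension bounds take q = 1, t = 0: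
  a set with H^{1,0}_mu = 0 is mu-null, so a subset of E_alpha of positive measure has
  H^s = infinity for every s < alpha.
\<close>

lemma Liminf_lessD:
  fixes f :: "_ \<Rightarrow> 'a::complete_linorder"
  assumes "Liminf F f < y"
  shows "\<exists>\<^sub>F x in F. f x < y"
proof (rule ccontr)
  assume "\<not> (\<exists>\<^sub>F x in F. f x < y)"
  then have "\<forall>\<^sub>F x in F. y \<le> f x" by (simp add: not_frequently not_less)
  then have "y \<le> Liminf F f" by (rule Liminf_bounded)
  with assms show False by simp
qed

lemma Liminf_eq_0I:
  fixes f :: "_ \<Rightarrow> ennreal"
  assumes "\<And>y. 0 < y \<Longrightarrow> \<exists>\<^sub>F x in F. f x \<le> ennreal y"
  shows "Liminf F f = 0"
proof -
  have "Liminf F f \<le> 0 + ennreal y" if "0 < y" for y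
  proof (rule ccontr)
    assume "\<not> Liminf F f \<le> 0 + ennreal y"
    then have "\<forall>\<^sub>F x in F. ennreal y < f x" by (intro less_LiminfD) simp
    with assms[OF \<open>0 < y\<close>] have "\<exists>\<^sub>F x in F. False"
      by (rule frequently_eventually_conj[THEN frequently_elim1]) (blast dest: leD)
    then show False by simp
  qed
  then have "Liminf F f \<le> 0" by (rule ennreal_le_epsilon) auto
  then show ?thesis by simp
qed

lemma le_INF_mult_ennrealI:
  fixes z :: ennreal and b :: real
  assumes "0 < b" "\<And>C. C \<in> S \<Longrightarrow> z \<le> f C * ennreal b"
  shows "z \<le> (INF C\<in>S. f C) * ennreal b"
proof -
  have "z / ennreal b \<le> (INF C\<in>S. f C)"
    using assms by (intro INF_greatest divide_le_posI_ennreal) (auto simp: mult.commute)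
  then have "z / ennreal b * ennreal b \<le> (INF C\<in>S. f C) * ennreal b"
    by (rule mult_right_mono) simp
  then show ?thesis using assms(1) by (simp add: ennreal_divide_times)
qed

lemma emeasure_UN_countable_le:
  assumes "\<And>i. i \<in> I \<Longrightarrow> X i \<in> sets M" "countable I"
  shows "emeasure M (\<Union>(X ` I)) \<le> (\<integral>\<^sup>+ i. emeasure M (X i) \<partial>count_space I)"
proof -
  have ind: "indicator (\<Union>(X ` I)) x \<le> (\<integral>\<^sup>+ i. indicator (X i) x \<partial>count_space I)" for x
  proof (cases "x \<in> \<Union>(X ` I)")
    case True
    then obtain j where j: "j \<in> I" "x \<in> X j" by auto
    have "(1::ennreal) = (\<integral>\<^sup>+ i. indicator {j} i \<partial>count_space I)"
      using j by (simp add: nn_integral_count_space_indicator)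
    also have "\<dots> \<le> (\<integral>\<^sup>+ i. indicator (X i) x \<partial>count_space I)"
      using j by (intro nn_integral_mono) (auto split: split_indicator)
    finally show ?thesis using True by simp
  qed simp
  have [measurable]: "\<Union>(X ` I) \<in> sets M" using assms by (intro sets.countable_UN') auto
  have "emeasure M (\<Union>(X ` I)) = (\<integral>\<^sup>+ x. indicator (\<Union>(X ` I)) x \<partial>M)" by simp
  also have "\<dots> \<le> (\<integral>\<^sup>+ x. \<integral>\<^sup>+ i. indicator (X i) x \<partial>count_space I \<partial>M)"
    by (intro nn_integral_mono ind)
  also have "\<dots> = (\<integral>\<^sup>+ i. \<integral>\<^sup>+ x. indicator (X i) x \<partial>M \<partial>count_space I)"
    using assms by (intro nn_integral_count_space_nn_integral) auto
  also have "\<dots> = (\<integral>\<^sup>+ i. emeasure M (X i) \<partial>count_space I)"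
    using assms by (intro nn_integral_cong) auto
  finally show ?thesis .
qed

lemma null_superset_if_small_supersets:
  assumes "\<And>e. 0 < e \<Longrightarrow> \<exists>U\<in>sets M. G \<subseteq> U \<and> emeasure M U \<le> ennreal e"
  shows "\<exists>N\<in>null_sets M. G \<subseteq> N"
proof -
  obtain U where U: "\<And>j. U j \<in> sets M" "\<And>j. G \<subseteq> U j"
      "\<And>j. emeasure M (U j) \<le> ennreal (inverse (real (Suc j)))"
  proof -
    have "\<exists>U. U \<in> sets M \<and> G \<subseteq> U \<and> emeasure M U \<le> ennreal (inverse (real (Suc j)))" for j
      using assms[of "inverse (real (Suc j))"] by auto
    then have "\<exists>U. \<forall>j. U j \<in> sets M \<and> G \<subseteq> U j \<and> emeasure M (U j) \<le> ennreal (inverse (real (Suc j)))"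
      by (intro choice allI)
    then show ?thesis using that by blast
  qed
  have "emeasure M (\<Inter>j. U j) \<le> 0 + ennreal e" if "0 < e" for e
  proof -
    obtain j where "inverse (real (Suc j)) < e" using reals_Archimedean[OF \<open>0 < e\<close>] by blast
    have "emeasure M (\<Inter>j. U j) \<le> emeasure M (U j)" using U(1) by (intro emeasure_mono) auto
    also have "\<dots> \<le> ennreal e" using U(3)[of j] \<open>inverse (real (Suc j)) < e\<close>
      by (meson ennreal_leI less_imp_le order.trans)
    finally show ?thesis by simp
  qed
  then have "emeasure M (\<Inter>j. U j) \<le> 0" by (rule ennreal_le_epsilon) auto
  moreover have "(\<Inter>j. U j) \<in> sets M" "G \<subseteq> (\<Inter>j. U j)" using U by auto
  ultimately show ?thesis by (auto intro: bexI[of _ "\<Inter>j. U j"])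
qed

lemma Union_refinement_nat:
  fixes E F :: "nat \<Rightarrow> 'a set"
  assumes "A \<subseteq> (\<Union>i. E i)" "A \<subseteq> (\<Union>m. F m)"
  obtains G :: "nat \<Rightarrow> 'a set"
  where "A \<subseteq> (\<Union>n. G n)" "\<And>n. \<exists>i m. G n = A \<inter> E i \<inter> F m"
proof
  let ?G = "\<lambda>n. case_prod (\<lambda>i m. A \<inter> E i \<inter> F m) (prod_decode n)"
  show "A \<subseteq> (\<Union>n. ?G n)"
  proof
    fix x assume "x \<in> A"
    then obtain i m where "x \<in> E i" "x \<in> F m" using assms by blast
    then have "x \<in> ?G (prod_encode (i, m))" using \<open>x \<in> A\<close> by simp
    then show "x \<in> (\<Union>n. ?G n)" by (rule UN_I[OF UNIV_I])
  qed
  show "\<exists>i m. ?G n = A \<inter> E i \<inter> F m" for n by (cases "prod_decode n") auto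
qed

lemma ball_sum_le_ecard:
  assumes "\<And>x. x \<in> C \<Longrightarrow> measure \<mu> (cball x r) powr q \<le> b"
  shows "ball_sum \<mu> q r C \<le> ecard C * ennreal b"
proof -
  have "ball_sum \<mu> q r C \<le> (\<integral>\<^sup>+ x. ennreal b \<partial>count_space C)"
    unfolding ball_sum_def using assms by (intro nn_integral_mono ennreal_leI) auto
  also have "\<dots> = ecard C * ennreal b"
    by (simp add: ecard_def emeasure_count_space mult.commute)
  finally show ?thesis .
qed

lemma recentred_cover:
  fixes E :: "'a::metric_space set"
  assumes "G \<subseteq> E" "finite C" "E \<subseteq> (\<Union>c\<in>C. cball c \<rho>)"
  obtains Y where "Y \<subseteq> G" "finite Y" "card Y \<le> card C" "G \<subseteq> (\<Union>y\<in>Y. cball y (2 * \<rho>))"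
proof -
  define C' where "C' = {c\<in>C. \<exists>g\<in>G. dist c g \<le> \<rho>}"
  define pick where "pick c = (SOME g. g \<in> G \<and> dist c g \<le> \<rho>)" for c
  have pick: "pick c \<in> G \<and> dist c (pick c) \<le> \<rho>" if "c \<in> C'" for c
    using that someI_ex[of "\<lambda>g. g \<in> G \<and> dist c g \<le> \<rho>"] unfolding C'_def pick_def by blast
  show ?thesis
  proof (rule that[of "pick ` C'"])
    show "pick ` C' \<subseteq> G" using pick by auto
    show "finite (pick ` C')" using assms(2) by (simp add: C'_def)
    have "card (pick ` C') \<le> card C'" by (rule card_image_le) (simp add: C'_def assms(2))
    also have "\<dots> \<le> card C" using assms(2) by (intro card_mono) (auto simp: C'_def)
    finally show "card (pick ` C') \<le> card C" .
    show "G \<subseteq> (\<Union>y\<in>pick ` C'. cball y (2 * \<rho>))"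
    proof
      fix g assume "g \<in> G"
      then obtain c where c: "c \<in> C" "dist c g \<le> \<rho>" using assms(1,3) by auto
      then have "c \<in> C'" using \<open>g \<in> G\<close> by (auto simp: C'_def)
      have "dist (pick c) g \<le> dist (pick c) c + dist c g" by (rule dist_triangle)
      also have "\<dots> \<le> 2 * \<rho>" using pick[OF \<open>c \<in> C'\<close>] c(2) by (simp add: dist_commute)
      finally show "g \<in> (\<Union>y\<in>pick ` C'. cball y (2 * \<rho>))" using \<open>c \<in> C'\<close> by auto
    qed
  qed
qed

lemma mf_N_double_radius_le:
  fixes E G :: "'a::metric_space set"
  assumes "G \<subseteq> E" "0 < b" "\<And>x. x \<in> G \<Longrightarrow> measure \<mu> (cball x (2 * \<rho>)) powr q \<le> b"
  shows "mf_N \<mu> q (2 * \<rho>) G \<le> hs_N \<rho> E * ennreal b"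
  unfolding hs_N_def
proof (rule le_INF_mult_ennrealI[OF \<open>0 < b\<close>])
  fix C assume "C \<in> {C. C \<subseteq> E \<and> E \<subseteq> (\<Union>x\<in>C. cball x \<rho>)}"
  then have C: "E \<subseteq> (\<Union>x\<in>C. cball x \<rho>)" by simp
  show "mf_N \<mu> q (2 * \<rho>) G \<le> ecard C * ennreal b"
  proof (cases "finite C")
    case True
    then obtain Y where Y: "Y \<subseteq> G" "finite Y" "card Y \<le> card C" "G \<subseteq> (\<Union>y\<in>Y. cball y (2 * \<rho>))"
      using recentred_cover[OF assms(1) _ C] by blast
    have "mf_N \<mu> q (2 * \<rho>) G \<le> ball_sum \<mu> q (2 * \<rho>) Y"
      unfolding mf_N_def using Y by (intro INF_lower) (auto intro: countable_finite)
    also have "\<dots> \<le> ecard Y * ennreal b" using Y(1) assms(3) by (intro ball_sum_le_ecard) auto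
    also have "\<dots> \<le> ecard C * ennreal b" using Y True
      by (intro mult_right_mono) (auto simp: ecard_def)
    finally show ?thesis .
  qed (use assms(2) in \<open>simp add: ecard_def\<close>)
qed

lemma mf_M_le_hs_M:
  fixes E G :: "'a::metric_space set"
  assumes "0 < r" "G \<subseteq> E" "\<And>x. x \<in> G \<Longrightarrow> measure \<mu> (cball x r) powr q \<le> b"
  shows "mf_M \<mu> q r G \<le> hs_M r E * ennreal b"
  unfolding mf_M_def
proof (rule SUP_least)
  fix C assume C: "C \<in> {C. C \<subseteq> G \<and> disjoint_family_on (\<lambda>x. cball x r) C}"
  have sep: "r \<le> dist x y" if "x \<in> C" "y \<in> C" "x \<noteq> y" for x y
  proof (rule ccontr)
    assume "\<not> r \<le> dist x y"
    then have "y \<in> cball x r \<inter> cball y r" using assms(1) by auto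
    with C that show False by (auto simp: disjoint_family_on_def)
  qed
  have "ball_sum \<mu> q r C \<le> ecard C * ennreal b" using C assms(3) by (intro ball_sum_le_ecard) auto
  also have "ecard C \<le> hs_M r E" unfolding hs_M_def using C assms(2) sep by (intro SUP_upper) auto
  then have "ecard C * ennreal b \<le> hs_M r E * ennreal b" by (rule mult_right_mono) simp
  finally show "ball_sum \<mu> q r C \<le> hs_M r E * ennreal b" .
qed

text \<open>A maximal r-separated subset of E is a centred r-cover of E.\<close>

lemma hs_N_le_hs_M:
  fixes E :: "'a::metric_space set"
  assumes "0 < r"
  shows "hs_N r E \<le> hs_M r E"
proof (cases "hs_M r E = \<infinity>")
  case False
  define sep where "sep C \<longleftrightarrow> C \<subseteq> E \<and> (\<forall>x\<in>C. \<forall>y\<in>C. x \<noteq> y \<longrightarrow> r \<le> dist x y)" for C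
  have ecard_le: "ecard C \<le> hs_M r E" if "sep C" for C
    using that unfolding hs_M_def sep_def by (intro SUP_upper) simp
  obtain k :: nat where k: "hs_M r E < of_nat k"
    using False ennreal_Ex_less_of_nat[of "hs_M r E"] by (auto simp: top.not_eq_extremum)
  have bnd: "finite C \<and> card C < k" if "sep C" for C
  proof -
    have "ecard C < of_nat k" using ecard_le[OF that] k by (rule order.strict_trans1)
    then show ?thesis by (cases "finite C") (simp_all add: ecard_def)
  qed
  have "\<exists>C. sep C \<and> (\<forall>D. sep D \<longrightarrow> card D \<le> card C)"
    by (rule ex_has_greatest_nat[of sep "{}" card k]) (use bnd in \<open>simp_all add: sep_def\<close>)
  then obtain C where C: "sep C" "\<And>D. sep D \<Longrightarrow> card D \<le> card C" by blast
  have "E \<subseteq> (\<Union>x\<in>C. cball x r)"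
  proof
    fix y assume "y \<in> E"
    show "y \<in> (\<Union>x\<in>C. cball x r)"
    proof (rule ccontr)
      assume "y \<notin> (\<Union>x\<in>C. cball x r)"
      then have far: "\<forall>x\<in>C. r < dist x y" by (auto simp: not_le)
      have "y \<notin> C"
      proof
        assume "y \<in> C"
        with far have "r < dist y y" by blast
        with assms show False by simp
      qed
      have "r \<le> dist a b" if "a \<in> insert y C" "b \<in> insert y C" "a \<noteq> b" for a b
        using that C(1) far by (auto simp: sep_def dist_commute intro: less_imp_le)
      then have "sep (insert y C)" using C(1) \<open>y \<in> E\<close> by (simp add: sep_def)
      then have "card (insert y C) \<le> card C" by (rule C(2))
      with \<open>y \<notin> C\<close> bnd[OF C(1)] show False by simp
    qed
  qed
  then have "hs_N r E \<le> ecard C" using C(1) unfolding hs_N_def sep_def by (intro INF_lower) simp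
  also have "\<dots> \<le> hs_M r E" by (rule ecard_le[OF C(1)])
  finally show ?thesis .
qed simp

lemma hs_H_le_hs_P: "hs_H s A \<le> hs_P s A"
proof -
  have "hs_Hbar s E \<le> hs_Pbar s E" for E :: "'a::metric_space set"
  proof -
    have "hs_Hbar s E \<le> Liminf (at_right 0) (\<lambda>r. hs_M r E * ennreal ((2 * r) powr s))"
      unfolding hs_Hbar_def
      by (intro Liminf_mono eventually_mono[OF eventually_at_right_less] mult_right_mono
          hs_N_le_hs_M) auto
    also have "\<dots> \<le> hs_Pbar s E" unfolding hs_Pbar_def by (rule Liminf_le_Limsup) simp
    finally show ?thesis .
  qed
  then show ?thesis unfolding hs_H_def hs_P_def by (intro INF_mono) (auto intro!: suminf_le)
qed

lemma hs_H_mono: "F \<subseteq> A \<Longrightarrow> hs_H s F \<le> hs_H s A"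
  unfolding hs_H_def by (rule INF_superset_mono) auto

lemma measure_cball_pos_if_in_msupp:
  assumes "finite_measure \<mu>" "sets \<mu> = sets borel" "x \<in> msupp \<mu>" "0 < r"
  shows "0 < measure \<mu> (cball x r)"
proof -
  have "0 < emeasure \<mu> (ball x r)" using assms(3,4) by (simp add: msupp_def)
  also have "\<dots> \<le> emeasure \<mu> (cball x r)" by (rule emeasure_mono) (auto simp: assms(2))
  finally show ?thesis by (simp add: finite_measure.emeasure_eq_measure[OF assms(1)])
qed

lemma powr_le_powr_if_ln_quotient_ge:
  fixes m \<rho> q \<gamma> :: real
  assumes "0 < m" "0 < \<rho>" "\<rho> < 1" "\<gamma> \<le> q * (ln m / ln \<rho>)"
  shows "m powr q \<le> \<rho> powr \<gamma>"
proof -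
  have "ln \<rho> < 0" using assms(2,3) by simp
  then have "q * ln m = q * (ln m / ln \<rho>) * ln \<rho>" by simp
  also have "\<dots> \<le> \<gamma> * ln \<rho>" using assms(4) \<open>ln \<rho> < 0\<close> by (intro mult_right_mono_neg) auto
  finally show ?thesis using assms(1,2) by (simp add: powr_def mult.commute)
qed

lemma eventually_measure_cball_powr_le:
  assumes "finite_measure \<mu>" "sets \<mu> = sets borel" "x \<in> msupp \<mu>"
    "\<forall>\<^sub>F \<rho> in at_right 0. \<gamma> \<le> q * (ln (measure \<mu> (cball x \<rho>)) / ln \<rho>)"
  shows "\<forall>\<^sub>F \<rho> in at_right 0. measure \<mu> (cball x \<rho>) powr q \<le> \<rho> powr \<gamma>"
proof -
  have "\<forall>\<^sub>F \<rho> in at_right (0::real). \<rho> < 1"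
    by (auto simp: eventually_at_right_field intro!: exI[of _ 1])
  with eventually_at_right_less[of 0] assms(4) show ?thesis
    by eventually_elim
      (use assms(1-3) in \<open>auto intro: powr_le_powr_if_ln_quotient_ge measure_cball_pos_if_in_msupp\<close>)
qed

lemma ex_margin_mult:
  fixes \<alpha> q \<gamma> :: real
  assumes "\<gamma> < \<alpha> * q"
  shows "\<exists>\<epsilon>>0. \<gamma> \<le> q * (\<alpha> + \<epsilon>) \<and> \<gamma> \<le> q * (\<alpha> - \<epsilon>)"
proof -
  define \<epsilon> where "\<epsilon> = (\<alpha> * q - \<gamma>) / (1 + \<bar>q\<bar>)"
  have "0 < \<epsilon>" using assms by (simp add: \<epsilon>_def add_pos_nonneg)
  have "\<bar>q\<bar> * \<epsilon> \<le> \<alpha> * q - \<gamma>"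
    using assms by (simp add: \<epsilon>_def field_simps)
  moreover have "- (\<bar>q\<bar> * \<epsilon>) \<le> q * \<epsilon>" "q * \<epsilon> \<le> \<bar>q\<bar> * \<epsilon>"
    using \<open>0 < \<epsilon>\<close> by (auto simp: abs_if mult_le_cancel_right)
  ultimately have "\<gamma> \<le> \<alpha> * q + q * \<epsilon>" "\<gamma> \<le> \<alpha> * q - q * \<epsilon>" by linarith+
  then show ?thesis using \<open>0 < \<epsilon>\<close> by (auto simp: algebra_simps)
qed

lemma eventually_measure_cball_powr_le_upper:
  assumes "finite_measure \<mu>" "sets \<mu> = sets borel" "q \<le> 0" "\<gamma> < \<alpha> * q" "x \<in> Ebar_up \<mu> \<alpha>"
  shows "\<forall>\<^sub>F \<rho> in at_right 0. measure \<mu> (cball x \<rho>) powr q \<le> \<rho> powr \<gamma>"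
proof -
  obtain \<epsilon> where "0 < \<epsilon>" and margin: "\<gamma> \<le> q * (\<alpha> + \<epsilon>)" using ex_margin_mult[OF assms(4)] by blast
  have "upper_locdim \<mu> x < ereal (\<alpha> + \<epsilon>)"
    using assms(5) \<open>0 < \<epsilon>\<close> by (auto simp: Ebar_up_def intro: le_less_trans)
  then have "\<forall>\<^sub>F \<rho> in at_right 0. ln (measure \<mu> (cball x \<rho>)) / ln \<rho> < \<alpha> + \<epsilon>"
    unfolding upper_locdim_def by (auto dest: Limsup_lessD)
  then have "\<forall>\<^sub>F \<rho> in at_right 0. \<gamma> \<le> q * (ln (measure \<mu> (cball x \<rho>)) / ln \<rho>)"
    by eventually_elim (rule order.trans[OF margin mult_left_mono_neg], use assms(3) in auto)
  then show ?thesis using assms(1,2,5)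
    by (intro eventually_measure_cball_powr_le) (auto simp: Ebar_up_def)
qed

lemma eventually_measure_cball_powr_le_lower:
  assumes "finite_measure \<mu>" "sets \<mu> = sets borel" "0 \<le> q" "\<gamma> < \<alpha> * q" "x \<in> E_low \<mu> \<alpha>"
  shows "\<forall>\<^sub>F \<rho> in at_right 0. measure \<mu> (cball x \<rho>) powr q \<le> \<rho> powr \<gamma>"
proof -
  obtain \<epsilon> where "0 < \<epsilon>" and margin: "\<gamma> \<le> q * (\<alpha> - \<epsilon>)" using ex_margin_mult[OF assms(4)] by blast
  have "ereal (\<alpha> - \<epsilon>) < lower_locdim \<mu> x"
    using assms(5) \<open>0 < \<epsilon>\<close> by (auto simp: E_low_def intro: less_le_trans[of _ "ereal \<alpha>"])
  then have "\<forall>\<^sub>F \<rho> in at_right 0. \<alpha> - \<epsilon> < ln (measure \<mu> (cball x \<rho>)) / ln \<rho>"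
    unfolding lower_locdim_def by (auto dest: less_LiminfD)
  then have "\<forall>\<^sub>F \<rho> in at_right 0. \<gamma> \<le> q * (ln (measure \<mu> (cball x \<rho>)) / ln \<rho>)"
    by eventually_elim (rule order.trans[OF margin mult_left_mono], use assms(3) in auto)
  then show ?thesis using assms(1,2,5)
    by (intro eventually_measure_cball_powr_le) (auto simp: E_low_def)
qed

definition mass_bounded :: "'a::metric_space measure \<Rightarrow> real \<Rightarrow> real \<Rightarrow> real \<Rightarrow> 'a set" where
  "mass_bounded \<mu> q \<gamma> r = {x. \<forall>\<rho>. 0 < \<rho> \<and> \<rho> < r \<longrightarrow> measure \<mu> (cball x \<rho>) powr q \<le> \<rho> powr \<gamma>}"

lemma subset_UN_mass_bounded:
  assumes "\<And>x. x \<in> A \<Longrightarrow> \<forall>\<^sub>F \<rho> in at_right 0. measure \<mu> (cball x \<rho>) powr q \<le> \<rho> powr \<gamma>"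
  shows "A \<subseteq> (\<Union>m. mass_bounded \<mu> q \<gamma> (inverse (real (Suc m))))"
proof
  fix x assume "x \<in> A"
  then obtain b where "0 < b" "\<forall>\<rho>>0. \<rho> < b \<longrightarrow> measure \<mu> (cball x \<rho>) powr q \<le> \<rho> powr \<gamma>"
    using assms unfolding eventually_at_right_field by auto
  moreover obtain m where "inverse (real (Suc m)) < b" using reals_Archimedean[OF \<open>0 < b\<close>] by blast
  ultimately have "x \<in> mass_bounded \<mu> q \<gamma> (inverse (real (Suc m)))" by (auto simp: mass_bounded_def)
  then show "x \<in> (\<Union>m. mass_bounded \<mu> q \<gamma> (inverse (real (Suc m))))" by blast
qed

lemma tendsto_mult_powr_double_at_right_0:
  fixes c d :: real
  assumes "0 < d"
  shows "((\<lambda>\<rho>. c * (2 * \<rho>) powr d) \<longlongrightarrow> 0) (at_right 0)"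
proof -
  have "((\<lambda>\<rho>::real. 2 * \<rho>) \<longlongrightarrow> 0) (at_right 0)"
    by (rule tendsto_mult_right_zero[OF tendsto_ident_at])
  then have "((\<lambda>\<rho>. (2 * \<rho>) powr d) \<longlongrightarrow> 0) (at_right 0)"
    using assms eventually_at_right_less[of 0]
      by (intro tendsto_zero_powrI) (auto elim: eventually_mono)
  then show ?thesis by (rule tendsto_mult_right_zero)
qed

lemma powr_times_double_powr_eq_double:
  fixes \<rho> :: real
  assumes "0 < \<rho>"
  shows "\<rho> powr \<gamma> * (2 * \<rho>) powr t = (2 * \<rho>) powr s * (2 powr (- \<gamma>) * (2 * \<rho>) powr (\<gamma> + t - s))"
proof -
  have "\<rho> powr \<gamma> = 2 powr (- \<gamma>) * (2 * \<rho>) powr \<gamma>"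
    using assms by (simp add: powr_mult powr_minus)
  moreover have "(2 * \<rho>) powr \<gamma> * (2 * \<rho>) powr t = (2 * \<rho>) powr s * (2 * \<rho>) powr (\<gamma> + t - s)"
    by (simp flip: powr_add)
  ultimately show ?thesis by (simp add: ac_simps)
qed

lemma powr_times_double_powr_eq:
  fixes a :: real
  assumes "0 < a"
  shows "a powr \<gamma> * (2 * a) powr t = a powr s * (2 powr t * a powr (\<gamma> + t - s))"
proof -
  have "(2 * a) powr t = 2 powr t * a powr t" using assms by (simp add: powr_mult)
  moreover have "a powr \<gamma> * a powr t = a powr s * a powr (\<gamma> + t - s)" by (simp flip: powr_add)
  ultimately show ?thesis by (simp add: ac_simps)
qed

lemma mf_M_scaled_le:
  fixes E G :: "'a::metric_space set"
  assumes "G \<subseteq> E" "G \<subseteq> mass_bounded \<mu> q \<gamma> r" "0 < \<rho>" "\<rho> < r"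
  shows "mf_M \<mu> q \<rho> G * ennreal ((2 * \<rho>) powr t)
    \<le> hs_M \<rho> E * ennreal ((2 * \<rho>) powr s) * ennreal (2 powr (- \<gamma>) * (2 * \<rho>) powr (\<gamma> + t - s))"
proof -
  have "mf_M \<mu> q \<rho> G * ennreal ((2 * \<rho>) powr t)
      \<le> hs_M \<rho> E * ennreal (\<rho> powr \<gamma>) * ennreal ((2 * \<rho>) powr t)"
    using assms by (intro mult_right_mono mf_M_le_hs_M) (auto simp: mass_bounded_def)
  also have "\<dots> = hs_M \<rho> E * ennreal (\<rho> powr \<gamma> * (2 * \<rho>) powr t)"
    by (simp add: ennreal_mult mult.assoc)
  also have "\<dots> = hs_M \<rho> E * ennreal ((2 * \<rho>) powr s * (2 powr (- \<gamma>) * (2 * \<rho>) powr (\<gamma> + t - s)))"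
    using powr_times_double_powr_eq_double[OF \<open>0 < \<rho>\<close>, of \<gamma> t s] by (simp only:)
  also have "\<dots> = hs_M \<rho> E * ennreal ((2 * \<rho>) powr s)
      * ennreal (2 powr (- \<gamma>) * (2 * \<rho>) powr (\<gamma> + t - s))"
    by (simp add: ennreal_mult mult.assoc)
  finally show ?thesis .
qed

lemma mf_N_scaled_le:
  fixes E G :: "'a::metric_space set"
  assumes "G \<subseteq> E" "G \<subseteq> mass_bounded \<mu> q \<gamma> r" "0 < \<rho>" "2 * \<rho> < r"
  shows "mf_N \<mu> q (2 * \<rho>) G * ennreal ((2 * (2 * \<rho>)) powr t)
    \<le> hs_N \<rho> E * ennreal ((2 * \<rho>) powr s) * ennreal (2 powr t * (2 * \<rho>) powr (\<gamma> + t - s))"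
proof -
  have "0 < 2 * \<rho>" using assms(3) by simp
  have "mf_N \<mu> q (2 * \<rho>) G * ennreal ((2 * (2 * \<rho>)) powr t)
      \<le> hs_N \<rho> E * ennreal ((2 * \<rho>) powr \<gamma>) * ennreal ((2 * (2 * \<rho>)) powr t)"
    using assms by (intro mult_right_mono mf_N_double_radius_le) (auto simp: mass_bounded_def)
  also have "\<dots> = hs_N \<rho> E * ennreal ((2 * \<rho>) powr \<gamma> * (2 * (2 * \<rho>)) powr t)"
    by (simp add: ennreal_mult mult.assoc)
  also have "\<dots> = hs_N \<rho> E * ennreal ((2 * \<rho>) powr s * (2 powr t * (2 * \<rho>) powr (\<gamma> + t - s)))"
    using powr_times_double_powr_eq[OF \<open>0 < 2 * \<rho>\<close>, of \<gamma> t s] by (simp only:)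
  also have "\<dots> = hs_N \<rho> E * ennreal ((2 * \<rho>) powr s)
      * ennreal (2 powr t * (2 * \<rho>) powr (\<gamma> + t - s))"
    by (simp add: ennreal_mult mult.assoc)
  finally show ?thesis .
qed

lemma mf_C_eq_0_if_mass_bounded:
  fixes E G :: "'a::metric_space set"
  assumes "hs_Pbar s E < \<infinity>" "s < \<gamma> + t" "G \<subseteq> E" "G \<subseteq> mass_bounded \<mu> q \<gamma> r" "0 < r"
  shows "mf_C \<mu> q t G = 0"
proof -
  define d where "d = \<gamma> + t - s"
  obtain k :: nat where "hs_Pbar s E < of_nat k" using assms(1) ennreal_Ex_less_of_nat by auto
  then have bounded: "\<forall>\<^sub>F \<rho> in at_right 0. hs_M \<rho> E * ennreal ((2 * \<rho>) powr s) < of_nat k"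
    unfolding hs_Pbar_def by (rule Limsup_lessD)
  define c where "c = real k * 2 powr (- \<gamma>)"
  have small_radius: "\<forall>\<^sub>F \<rho> in at_right 0. 0 < \<rho> \<and> \<rho> < r"
    using assms(5) by (auto simp: eventually_at_right_field)
  from bounded small_radius
  have upper: "\<forall>\<^sub>F \<rho> in at_right 0.
    mf_M \<mu> q \<rho> G * ennreal ((2 * \<rho>) powr t) \<le> ennreal (c * (2 * \<rho>) powr d)"
  proof eventually_elim
    case (elim \<rho>)
    have "mf_M \<mu> q \<rho> G * ennreal ((2 * \<rho>) powr t)
        \<le> hs_M \<rho> E * ennreal ((2 * \<rho>) powr s) * ennreal (2 powr (- \<gamma>) * (2 * \<rho>) powr d)"
      using elim assms(3,4) unfolding d_def by (intro mf_M_scaled_le) auto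
    also have "\<dots> \<le> of_nat k * ennreal (2 powr (- \<gamma>) * (2 * \<rho>) powr d)"
      using elim by (intro mult_right_mono) auto
    also have "\<dots> = ennreal (c * (2 * \<rho>) powr d)"
      by (simp add: c_def ennreal_mult' ennreal_of_nat_eq_real_of_nat mult.assoc)
    finally show ?case .
  qed
  have lim: "((\<lambda>\<rho>. ennreal (c * (2 * \<rho>) powr d)) \<longlongrightarrow> 0) (at_right 0)"
    using tendsto_ennrealI[OF tendsto_mult_powr_double_at_right_0] assms(2) by (simp add: d_def)
  have "((\<lambda>\<rho>. mf_M \<mu> q \<rho> G * ennreal ((2 * \<rho>) powr t)) \<longlongrightarrow> 0) (at_right 0)"
    by (rule tendsto_sandwich[OF _ upper tendsto_const lim]) simp
  then show ?thesis unfolding mf_C_def by (intro lim_imp_Limsup) simp_all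
qed

lemma frequently_at_right_0_double:
  assumes "\<exists>\<^sub>F \<rho> in at_right 0. P (2 * \<rho>)"
  shows "\<exists>\<^sub>F r in at_right (0::real). P r"
proof -
  have "filtermap ((*) 2) (at_right 0) = at_right (0::real)"
    using filtermap_times_pos_at_right[of "2::real" 0] by simp
  moreover have "\<exists>\<^sub>F r in filtermap ((*) 2) (at_right 0). P r"
    using assms by (simp add: frequently_filtermap)
  ultimately show ?thesis by simp
qed

lemma mf_L_eq_0_if_mass_bounded:
  fixes E G :: "'a::metric_space set"
  assumes "hs_Hbar s E < \<infinity>" "s < \<gamma> + t" "G \<subseteq> E" "G \<subseteq> mass_bounded \<mu> q \<gamma> r" "0 < r"
  shows "mf_L \<mu> q t G = 0"
  unfolding mf_L_def
proof (rule Liminf_eq_0I)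
  fix y :: real assume "0 < y"
  define d where "d = \<gamma> + t - s"
  obtain k :: nat where "hs_Hbar s E < of_nat k" using assms(1) ennreal_Ex_less_of_nat by auto
  then have often_bounded: "\<exists>\<^sub>F \<rho> in at_right 0. hs_N \<rho> E * ennreal ((2 * \<rho>) powr s) < of_nat k"
    unfolding hs_Hbar_def by (rule Liminf_lessD)
  define c where "c = real k * 2 powr t"
  have "\<forall>\<^sub>F \<rho> in at_right 0. c * (2 * \<rho>) powr d < y"
    using tendsto_mult_powr_double_at_right_0 assms(2) \<open>0 < y\<close>
      by (intro order_tendstoD(2)) (auto simp: d_def)
  moreover have "\<forall>\<^sub>F \<rho> in at_right 0. 0 < \<rho> \<and> 2 * \<rho> < r"
    using assms(5) by (auto simp: eventually_at_right_field intro!: exI[of _ "r / 2"])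
  ultimately have "\<exists>\<^sub>F \<rho> in at_right 0.
    mf_N \<mu> q (2 * \<rho>) G * ennreal ((2 * (2 * \<rho>)) powr t) \<le> ennreal y"
    using often_bounded
  proof (rule eventually_conj[THEN frequently_eventually_conj[rotated], THEN frequently_elim1])
    fix \<rho> assume \<rho>: "(c * (2 * \<rho>) powr d < y \<and> 0 < \<rho> \<and> 2 * \<rho> < r)
      \<and> hs_N \<rho> E * ennreal ((2 * \<rho>) powr s) < of_nat k"
    have "mf_N \<mu> q (2 * \<rho>) G * ennreal ((2 * (2 * \<rho>)) powr t)
        \<le> hs_N \<rho> E * ennreal ((2 * \<rho>) powr s) * ennreal (2 powr t * (2 * \<rho>) powr d)"
      using \<rho> assms(3,4) unfolding d_def by (intro mf_N_scaled_le) auto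
    also have "\<dots> \<le> of_nat k * ennreal (2 powr t * (2 * \<rho>) powr d)"
      using \<rho> by (intro mult_right_mono) auto
    also have "\<dots> = ennreal (c * (2 * \<rho>) powr d)"
      by (simp add: c_def ennreal_mult' ennreal_of_nat_eq_real_of_nat mult.assoc)
    also have "\<dots> \<le> ennreal y" using \<rho> by (intro ennreal_leI) simp
    finally show "mf_N \<mu> q (2 * \<rho>) G * ennreal ((2 * (2 * \<rho>)) powr t) \<le> ennreal y" .
  qed
  then show "\<exists>\<^sub>F r in at_right 0. mf_N \<mu> q r G * ennreal ((2 * r) powr t) \<le> ennreal y"
    by (rule frequently_at_right_0_double)
qed

text \<open>
  The union of a centred cover witnessing N^1_{mu,r}(G) < e is a measurable superset of G of
  measure < e.
\<close>

lemma null_superset_if_mf_L_1_0_eq_0: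
  assumes "finite_measure \<mu>" "sets \<mu> = sets borel" "mf_L \<mu> 1 0 G = 0"
  shows "\<exists>N\<in>null_sets \<mu>. G \<subseteq> N"
proof (rule null_superset_if_small_supersets)
  fix e :: real assume "0 < e"
  with assms(3) have "\<exists>\<^sub>F r in at_right 0. mf_N \<mu> 1 r G * ennreal ((2 * r) powr 0) < ennreal e"
    unfolding mf_L_def by (intro Liminf_lessD) simp
  then have "\<exists>\<^sub>F r in at_right 0. 0 < r \<and> mf_N \<mu> 1 r G * ennreal ((2 * r) powr 0) < ennreal e"
    using eventually_at_right_less[of 0] by (rule frequently_eventually_conj)
  then obtain r where "0 < r" "mf_N \<mu> 1 r G < ennreal e" by (auto dest: frequently_ex)
  then obtain C where C: "C \<subseteq> G" "countable C" "G \<subseteq> (\<Union>x\<in>C. cball x r)"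
      "ball_sum \<mu> 1 r C < ennreal e"
    unfolding mf_N_def INF_less_iff by blast
  have "emeasure \<mu> (\<Union>x\<in>C. cball x r) \<le> (\<integral>\<^sup>+ x. emeasure \<mu> (cball x r) \<partial>count_space C)"
    using C(2) by (intro emeasure_UN_countable_le) (auto simp: assms(2))
  also have "\<dots> = ball_sum \<mu> 1 r C"
    unfolding ball_sum_def by (simp add: finite_measure.emeasure_eq_measure[OF assms(1)])
  finally have "emeasure \<mu> (\<Union>x\<in>C. cball x r) \<le> ennreal e" using C(4) by simp
  moreover have "(\<Union>x\<in>C. cball x r) \<in> sets \<mu>" using C(2)
    by (intro sets.countable_UN') (auto simp: assms(2))
  ultimately show "\<exists>U\<in>sets \<mu>. G \<subseteq> U \<and> emeasure \<mu> U \<le> ennreal e" using C(3) by blast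
qed

lemma cover_by_mf_C_zero_pieces:
  fixes A :: "'a::metric_space set"
  assumes "hs_P s A < \<infinity>" "s < \<gamma> + t"
    "\<And>x. x \<in> A \<Longrightarrow> \<forall>\<^sub>F \<rho> in at_right 0. measure \<mu> (cball x \<rho>) powr q \<le> \<rho> powr \<gamma>"
  obtains G :: "nat \<Rightarrow> 'a set" where "A \<subseteq> (\<Union>n. G n)" "\<And>n. G n \<subseteq> A" "\<And>n. mf_C \<mu> q t (G n) = 0"
proof -
  obtain Es where Es: "A \<subseteq> (\<Union>i. Es i)" "(\<Sum>i. hs_Pbar s (Es i)) < \<infinity>"
    using assms(1) unfolding hs_P_def INF_less_iff by blast
  obtain G where G: "A \<subseteq> (\<Union>n::nat. G n)"
      "\<And>n. \<exists>i m. G n = A \<inter> Es i \<inter> mass_bounded \<mu> q \<gamma> (inverse (real (Suc m)))"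
    using Union_refinement_nat[OF Es(1) subset_UN_mass_bounded[OF assms(3)]] by blast
  have finite: "hs_Pbar s (Es i) < \<infinity>" for i using Es(2) by (rule ennreal_suminf_lessD)
  show ?thesis
  proof (rule that[OF G(1)])
    fix n
    obtain i m where Gn: "G n = A \<inter> Es i \<inter> mass_bounded \<mu> q \<gamma> (inverse (real (Suc m)))"
      using G(2) by blast
    show "G n \<subseteq> A" using Gn by blast
    show "mf_C \<mu> q t (G n) = 0"
      using Gn
      by (intro mf_C_eq_0_if_mass_bounded[OF finite assms(2), where r = "inverse (real (Suc m))"]) auto
  qed
qed

lemma cover_by_mf_L_zero_pieces:
  fixes A :: "'a::metric_space set"
  assumes "hs_H s A < \<infinity>" "s < \<gamma> + t"
    "\<And>x. x \<in> A \<Longrightarrow> \<forall>\<^sub>F \<rho> in at_right 0. measure \<mu> (cball x \<rho>) powr q \<le> \<rho> powr \<gamma>"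
  obtains G :: "nat \<Rightarrow> 'a set" where "A \<subseteq> (\<Union>n. G n)" "\<And>n. G n \<subseteq> A" "\<And>n. mf_L \<mu> q t (G n) = 0"
proof -
  obtain Es where Es: "A \<subseteq> (\<Union>i. Es i)" "(\<Sum>i. hs_Hbar s (Es i)) < \<infinity>"
    using assms(1) unfolding hs_H_def INF_less_iff by blast
  obtain G where G: "A \<subseteq> (\<Union>n::nat. G n)"
      "\<And>n. \<exists>i m. G n = A \<inter> Es i \<inter> mass_bounded \<mu> q \<gamma> (inverse (real (Suc m)))"
    using Union_refinement_nat[OF Es(1) subset_UN_mass_bounded[OF assms(3)]] by blast
  have finite: "hs_Hbar s (Es i) < \<infinity>" for i using Es(2) by (rule ennreal_suminf_lessD)
  show ?thesis
  proof (rule that[OF G(1)])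
    fix n
    obtain i m where Gn: "G n = A \<inter> Es i \<inter> mass_bounded \<mu> q \<gamma> (inverse (real (Suc m)))"
      using G(2) by blast
    show "G n \<subseteq> A" using Gn by blast
    show "mf_L \<mu> q t (G n) = 0"
      using Gn
      by (intro mf_L_eq_0_if_mass_bounded[OF finite assms(2), where r = "inverse (real (Suc m))"]) auto
  qed
qed

lemma mf_P_eq_0_if_hs_P_finite:
  fixes A :: "'a::metric_space set"
  assumes "bounded A" "hs_P s A < \<infinity>" "s < \<gamma> + t"
    "\<And>x. x \<in> A \<Longrightarrow> \<forall>\<^sub>F \<rho> in at_right 0. measure \<mu> (cball x \<rho>) powr q \<le> \<rho> powr \<gamma>"
  shows "mf_P \<mu> q t A = 0"
proof -
  obtain G where G: "A \<subseteq> (\<Union>n::nat. G n)" "\<And>n. G n \<subseteq> A" "\<And>n. mf_C \<mu> q t (G n) = 0"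
    using cover_by_mf_C_zero_pieces[OF assms(2-4)] by blast
  have "bounded (G n)" for n using bounded_subset[OF assms(1) G(2)] .
  then have "mf_P \<mu> q t A \<le> (\<Sum>n. mf_C \<mu> q t (G n))"
    unfolding mf_P_def using G(1) by (intro INF_lower) auto
  then show ?thesis by (simp add: G(3))
qed

lemma mf_H_eq_0_if_hs_H_finite:
  fixes A :: "'a::metric_space set"
  assumes "bounded A" "hs_H s A < \<infinity>" "s < \<gamma> + t"
    "\<And>x. x \<in> A \<Longrightarrow> \<forall>\<^sub>F \<rho> in at_right 0. measure \<mu> (cball x \<rho>) powr q \<le> \<rho> powr \<gamma>"
  shows "mf_H \<mu> q t A = 0"
proof -
  have "mf_Hbar \<mu> q t F = 0" if "F \<subseteq> A" for F
  proof -
    have finite: "hs_H s F < \<infinity>" using hs_H_mono[OF that] assms(2) by (rule le_less_trans)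
    have bound: "\<forall>\<^sub>F \<rho> in at_right 0. measure \<mu> (cball x \<rho>) powr q \<le> \<rho> powr \<gamma>" if "x \<in> F" for x
      using assms(4) \<open>F \<subseteq> A\<close> that by blast
    obtain G where G: "F \<subseteq> (\<Union>n::nat. G n)" "\<And>n. G n \<subseteq> F" "\<And>n. mf_L \<mu> q t (G n) = 0"
      using cover_by_mf_L_zero_pieces[OF finite assms(3) bound] by blast
    have "bounded (G n)" for n using bounded_subset[OF assms(1)] G(2)[of n] that by blast
    then have "mf_Hbar \<mu> q t F \<le> (\<Sum>n. mf_L \<mu> q t (G n))"
      unfolding mf_Hbar_def using G(1) by (intro INF_lower) auto
    then show ?thesis by (simp add: G(3))
  qed
  then show ?thesis unfolding mf_H_def by (auto intro!: antisym SUP_least)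
qed

lemma hs_H_eq_infinity_if_positive_measure:
  assumes "finite_measure \<mu>" "sets \<mu> = sets borel" "A \<subseteq> E_low \<mu> \<alpha>" "0 < emeasure \<mu> A" "s < \<alpha>"
  shows "hs_H s A = \<infinity>"
proof (rule ccontr)
  assume "hs_H s A \<noteq> \<infinity>"
  define \<beta> where "\<beta> = (s + \<alpha>) / 2"
  have "s < \<beta> + 0" "\<beta> < \<alpha> * 1" using assms(5) by (simp_all add: \<beta>_def)
  have finite: "hs_H s A < \<infinity>" using \<open>hs_H s A \<noteq> \<infinity>\<close> by (simp add: top.not_eq_extremum)
  have bound: "\<forall>\<^sub>F \<rho> in at_right 0. measure \<mu> (cball x \<rho>) powr 1 \<le> \<rho> powr \<beta>" if "x \<in> A" for x
    using assms(3) that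
      by (intro eventually_measure_cball_powr_le_lower[OF assms(1,2) _ \<open>\<beta> < \<alpha> * 1\<close>]) auto
  obtain G where G: "A \<subseteq> (\<Union>n::nat. G n)" "\<And>n. G n \<subseteq> A" "\<And>n. mf_L \<mu> 1 0 (G n) = 0"
    using cover_by_mf_L_zero_pieces[OF finite \<open>s < \<beta> + 0\<close> bound] by blast
  have "\<forall>n. \<exists>N. N \<in> null_sets \<mu> \<and> G n \<subseteq> N"
    using null_superset_if_mf_L_1_0_eq_0[OF assms(1,2) G(3)] by blast
  then obtain N where N: "\<And>n. N n \<in> null_sets \<mu>" "\<And>n. G n \<subseteq> N n"
    using choice[of "\<lambda>n N. N \<in> null_sets \<mu> \<and> G n \<subseteq> N"] by blast
  have "(\<Union>n. N n) \<in> null_sets \<mu>" using N(1) by (rule null_sets_UN)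
  moreover have "A \<subseteq> (\<Union>n. N n)" using G(1) N(2) by blast
  ultimately have "emeasure \<mu> A = 0" by (meson emeasure_eq_0 null_setsD1 null_setsD2)
  with assms(4) show False by simp
qed

lemma lower_dim_MB_ge:
  assumes "\<And>s. s < \<alpha> \<Longrightarrow> hs_H s A = \<infinity>"
  shows "ereal \<alpha> \<le> lower_dim_MB A"
  unfolding lower_dim_MB_def
proof (rule Inf_greatest)
  fix x assume "x \<in> ereal ` {s. 0 \<le> s \<and> hs_H s A = 0}"
  then obtain s where "x = ereal s" "hs_H s A = 0" by blast
  then show "ereal \<alpha> \<le> x" using assms[of s] by (cases "s < \<alpha>") auto
qed

lemma upper_dim_MB_ge:
  assumes "\<And>s. s < \<alpha> \<Longrightarrow> hs_H s A = \<infinity>"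
  shows "ereal \<alpha> \<le> upper_dim_MB A"
  unfolding upper_dim_MB_def
proof (rule Inf_greatest)
  fix x assume "x \<in> ereal ` {s. 0 \<le> s \<and> hs_P s A = 0}"
  then obtain s where "x = ereal s" "hs_P s A = 0" by blast
  then show "ereal \<alpha> \<le> x" using assms[of s] hs_H_le_hs_P[of s A] by (cases "s < \<alpha>") auto
qed

lemma ennreal_mult_le_if_finite_imp_zero:
  fixes X Y c :: ennreal
  assumes "X < \<infinity> \<Longrightarrow> Y = 0"
  shows "c * Y \<le> X"
  using assms by (cases "X < \<infinity>") (auto simp: not_less top_unique)

lemma mf_P_mf_H_dominated_by_hs_P_hs_H:
  fixes \<mu> :: "'a::metric_space measure" and c :: ennreal
  assumes "finite_measure \<mu>" "sets \<mu> = sets borel" "compact (msupp \<mu>)" "0 < \<delta>"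
    "q \<le> 0 \<and> A \<subseteq> Ebar_up \<mu> \<alpha> \<or> 0 \<le> q \<and> A \<subseteq> E_low \<mu> \<alpha>"
  shows "c * mf_P \<mu> q t A \<le> hs_P (\<alpha> * q + t - \<delta>) A \<and> c * mf_H \<mu> q t A \<le> hs_H (\<alpha> * q + t - \<delta>) A"
proof -
  define \<gamma> where "\<gamma> = \<alpha> * q - \<delta> / 2"
  have \<gamma>: "\<gamma> < \<alpha> * q" "\<alpha> * q + t - \<delta> < \<gamma> + t" using \<open>0 < \<delta>\<close> by (simp_all add: \<gamma>_def)
  have "bounded A"
    using assms(5) bounded_subset[OF compact_imp_bounded[OF assms(3)]]
      by (auto simp: Ebar_up_def E_low_def)
  have bound: "\<forall>\<^sub>F \<rho> in at_right 0. measure \<mu> (cball x \<rho>) powr q \<le> \<rho> powr \<gamma>" if "x \<in> A" for x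
    using that assms(5) eventually_measure_cball_powr_le_upper[OF assms(1,2) _ \<gamma>(1)]
      eventually_measure_cball_powr_le_lower[OF assms(1,2) _ \<gamma>(1)] by blast
  show ?thesis
    using mf_P_eq_0_if_hs_P_finite[OF \<open>bounded A\<close> _ \<gamma>(2) bound]
      mf_H_eq_0_if_hs_H_finite[OF \<open>bounded A\<close> _ \<gamma>(2) bound]
    by (blast intro: ennreal_mult_le_if_finite_imp_zero)
qed

lemma lower_upper_dim_MB_ge_if_positive_measure:
  assumes "finite_measure \<mu>" "sets \<mu> = sets borel" "A \<subseteq> E_low \<mu> \<alpha>" "0 < emeasure \<mu> A"
  shows "ereal \<alpha> \<le> lower_dim_MB A \<and> ereal \<alpha> \<le> upper_dim_MB A"
  using hs_H_eq_infinity_if_positive_measure[OF assms]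
  by (simp add: lower_dim_MB_ge upper_dim_MB_ge)

theorem lemma3p5:
  fixes \<mu> :: "'a::euclidean_space measure" and \<alpha> q t \<delta> :: real
  assumes "prob_space \<mu>" and "sets \<mu> = sets borel" and "compact (msupp \<mu>)"
    and "\<alpha> \<ge> 0" and "\<delta> > 0" and "\<delta> \<le> \<alpha> * q + t"
  shows
   "(q \<le> 0 \<longrightarrow> (\<forall>A. A \<subseteq> Ebar_up \<mu> \<alpha> \<longrightarrow> A \<in> sets borel \<longrightarrow>
        hs_P (\<alpha> * q + t - \<delta>) A \<ge> ennreal (2 powr (\<alpha> * q - \<delta>)) * mf_P \<mu> q t A))
  \<and> (q \<ge> 0 \<longrightarrow> (\<forall>A. A \<subseteq> E_low \<mu> \<alpha> \<longrightarrow> A \<in> sets borel \<longrightarrow>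
        hs_P (\<alpha> * q + t - \<delta>) A \<ge> ennreal (2 powr (\<alpha> * q - \<delta>)) * mf_P \<mu> q t A))
  \<and> (\<forall>A. A \<subseteq> E_low \<mu> \<alpha> \<longrightarrow> A \<in> sets borel \<longrightarrow> emeasure \<mu> A > 0 \<longrightarrow>
        upper_dim_MB A \<ge> ereal \<alpha>)
  \<and> (q \<le> 0 \<longrightarrow> (\<forall>A. A \<subseteq> Ebar_up \<mu> \<alpha> \<longrightarrow> A \<in> sets borel \<longrightarrow>
        hs_H (\<alpha> * q + t - \<delta>) A \<ge> ennreal (2 powr (\<alpha> * q - \<delta>)) * mf_H \<mu> q t A))
  \<and> (q \<ge> 0 \<longrightarrow> (\<forall>A. A \<subseteq> E_low \<mu> \<alpha> \<longrightarrow> A \<in> sets borel \<longrightarrow>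
        hs_H (\<alpha> * q + t - \<delta>) A \<ge> ennreal (2 powr (\<alpha> * q - \<delta>)) * mf_H \<mu> q t A))
  \<and> (\<forall>A. A \<subseteq> E_low \<mu> \<alpha> \<longrightarrow> A \<in> sets borel \<longrightarrow> emeasure \<mu> A > 0 \<longrightarrow>
        lower_dim_MB A \<ge> ereal \<alpha>)"
proof -
  have "finite_measure \<mu>" using assms(1) by (simp add: prob_space_def)
  note comparisons = mf_P_mf_H_dominated_by_hs_P_hs_H[OF this assms(2,3,5)]
    and dimensions = lower_upper_dim_MB_ge_if_positive_measure[OF this assms(2)]
  show ?thesis
    by (intro conjI allI impI) (simp_all add: comparisons dimensions)
qed

end
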